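(* Let $P:\mathcal C^{op}\to\mathbf{Pos}$ and $Q:\mathcal D^{op}\to\mathbf{Pos}$ be doctrines and $(L,\lambda)\dashv(R,\rho)$ an adjunction in $\mathbf{IdxPos}$ with unit $\eta$ and counit $\epsilon$. Let $\square$ be the interior operator on $QL^{op}$ with $\square_X=\lambda_X\circ P(\eta_X)\circ\rho_{LX}$, let $\square QL^{op}:\mathcal C^{op}\to\mathbf{Pos}$ be the doctrine of its fixed points, $\square QL^{op}(X)=\{\alpha\in Q(LX)\mid\square_X\alpha=\alpha\}$, with inclusion $\iota:\square QL^{op}\Rightarrow QL^{op}$, and let $\rho'=(P\eta^{op})\cdot(\rho L^{op})$, with components $\rho'_X=P(\eta_X)\circ\rho_{LX}:Q(LX)\to PX$. Then the following diagram of adjunctions in $\mathbf{IdxPos}$ commutes: $(\mathrm{Id}_{\mathcal C},\lambda)\dashv(\mathrm{Id}_{\mathcal C},\rho')$ between $P$ and $\square QL^{op}$ (with $\lambda$ corestricted to $\square QL^{op}$ and $\rho'$ restricted to it) and between $P$ and $QL^{op}$; $(\mathrm{Id}_{\mathcal C},\iota)\dashv(\mathrm{Id}_{\mathcal C},\square)$ between $\square QL^{op}$ and $QL^{op}$; $(L,\iota)\dashv(R,\square\cdot(Q\epsilon^{op}))$ between $\square QL^{op}$ and $Q$ (right adjoint components $\square_{RY}\circ Q(\epsilon_Y)$); and $(L,\mathrm{id})\dashv(R,Q\epsilon^{op})$ between $QL^{op}$ and $Q$; that is, the composites of these left adjoints (respectively right adjoints) along the paths $P\to\square QL^{op}\to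 Q$, $P\to QL^{op}\to Q$, $P\to\square QL^{op}\to QL^{op}$ and $\square QL^{op}\to QL^{op}\to Q$ agree wherever they have the same source and target. Moreover, the natural transformation $\lambda:P\Rightarrow\square QL^{op}$ is componentwise surjective and $\rho':\square QL^{op}\Rightarrow P$ is componentwise injective.
   Context: A doctrine is a functor $P:\mathcal C^{op}\to\mathbf{Pos}$; for $t:X\to Y$, $P(t):PY\to PX$ is reindexing. In the 2-category $\mathbf{IdxPos}$, a 1-arrow $(F,f):P\to Q$ (with $P:\mathcal C^{op}\to\mathbf{Pos}$, $Q:\mathcal D^{op}\to\mathbf{Pos}$) is a functor $F:\mathcal C\to\mathcal D$ with a natural transformation $f:P\Rightarrow Q\circ F^{op}$; a 2-arrow $\theta:(F,f)\Rightarrow(F',f')$ is a natural transformation $\theta:F\Rightarrow F'$ with $f_X(\alpha)\le Q(\theta_X)(f'_X(\alpha))$ for all $X,\alpha$; composition of $(G,g)$ then $(F,f)$ is $(FG,(fG^{op})\cdot g)$ (components $f_{GX}\circ g_X$). An adjunction $(L,\lambda)\dashv(R,\rho)$ in $\mathbf{IdxPos}$ amounts to: $L\dashv R$ adjunction of categories with unit $\eta:\mathrm{Id}_{\mathcal C}\Rightarrow RL$ and counit $\epsilon:LR\Rightarrow\mathrm{Id}_{\mathcal D}$; natural $\lambda:P\Rightarrow QL^{op}$, $\rho:Q\Rightarrow PR^{op}$ with $\alpha\le P(\eta_X)(\rho_{LX}\lambda_X\alpha)$ and $\lambda_{RY}(\rho_Y\beta)\le Q(\epsilon_Y)(\beta)$.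 In the diagram, adjunctions whose functors are identities have identity unit and counit, and the adjunctions between $\square QL^{op}$ or $QL^{op}$ and $Q$ have unit $\eta$ and counit $\epsilon$. An interior operator on a doctrine $M$ is a natural $\square:M\Rightarrow M$ with $\square_X\alpha\le\alpha$, $\square_X\alpha\le\square_X\square_X\alpha$. *)

theory Defs
  imports Main
begin

record ('o,'a) cat =
  Obj :: "'o set"
  Arr :: "'a set"
  Dom :: "'a \<Rightarrow> 'o"
  Cod :: "'a \<Rightarrow> 'o"
  Idm :: "'o \<Rightarrow> 'a"
  Cmp :: "'a \<Rightarrow> 'a \<Rightarrow> 'a"  (* Cmp C g f = g o f *)

definition hom :: "('o,'a,'m) cat_scheme \<Rightarrow> 'o \<Rightarrow> 'o \<Rightarrow> 'a set" where
  "hom C X Y = {f \<in> Arr C. Dom C f = X \<and> Cod C f = Y}"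

definition category :: "('o,'a) cat \<Rightarrow> bool" where
  "category C \<longleftrightarrow>
     (\<forall>f\<in>Arr C. Dom C f \<in> Obj C \<and> Cod C f \<in> Obj C) \<and>
     (\<forall>X\<in>Obj C. Idm C X \<in> hom C X X) \<and>
     (\<forall>f\<in>Arr C. \<forall>g\<in>Arr C. Cod C f = Dom C g \<longrightarrow>
         Cmp C g f \<in> hom C (Dom C f) (Cod C g)) \<and>
     (\<forall>f\<in>Arr C. Cmp C (Idm C (Cod C f)) f = f \<and> Cmp C f (Idm C (Dom C f)) = f) \<and>
     (\<forall>f\<in>Arr C. \<forall>g\<in>Arr C. \<forall>h\<in>Arr C. Cod C f = Dom C g \<longrightarrow> Cod C g = Dom C h \<longrightarrow>
         Cmp C h (Cmp C g f) = Cmp C (Cmp C h g) f)"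

definition "functor" :: "('o1,'a1) cat \<Rightarrow> ('o2,'a2) cat \<Rightarrow> ('o1 \<Rightarrow> 'o2) \<Rightarrow> ('a1 \<Rightarrow> 'a2) \<Rightarrow> bool" where
  "functor C D Fo Fa \<longleftrightarrow>
     (\<forall>X\<in>Obj C. Fo X \<in> Obj D) \<and>
     (\<forall>f\<in>Arr C. Fa f \<in> hom D (Fo (Dom C f)) (Fo (Cod C f))) \<and>
     (\<forall>X\<in>Obj C. Fa (Idm C X) = Idm D (Fo X)) \<and>
     (\<forall>f\<in>Arr C. \<forall>g\<in>Arr C. Cod C f = Dom C g \<longrightarrow> Fa (Cmp C g f) = Cmp D (Fa g) (Fa f))"

definition cat_adj :: "('o1,'a1) cat \<Rightarrow> ('o2,'a2) cat \<Rightarrow> ('o1 \<Rightarrow> 'o2) \<Rightarrow> ('a1 \<Rightarrow> 'a2)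
    \<Rightarrow> ('o2 \<Rightarrow> 'o1) \<Rightarrow> ('a2 \<Rightarrow> 'a1) \<Rightarrow> ('o1 \<Rightarrow> 'a1) \<Rightarrow> ('o2 \<Rightarrow> 'a2) \<Rightarrow> bool" where
  "cat_adj C D Lo La Ro Ra eta eps \<longleftrightarrow>
     functor C D Lo La \<and> functor D C Ro Ra \<and>
     (\<forall>X\<in>Obj C. eta X \<in> hom C X (Ro (Lo X))) \<and>
     (\<forall>t\<in>Arr C. Cmp C (Ra (La t)) (eta (Dom C t)) = Cmp C (eta (Cod C t)) t) \<and>
     (\<forall>Y\<in>Obj D. eps Y \<in> hom D (Lo (Ro Y)) Y) \<and>
     (\<forall>s\<in>Arr D. Cmp D (eps (Cod D s)) (La (Ra s)) = Cmp D s (eps (Dom D s))) \<and>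
     (\<forall>X\<in>Obj C. Cmp D (eps (Lo X)) (La (eta X)) = Idm D (Lo X)) \<and>
     (\<forall>Y\<in>Obj D. Cmp C (Ra (eps Y)) (eta (Ro Y)) = Idm C (Ro Y))"

record ('o,'a,'e) doctrine =
  Car :: "'o \<Rightarrow> 'e set"
  Le  :: "'o \<Rightarrow> 'e \<Rightarrow> 'e \<Rightarrow> bool"
  Rx  :: "'a \<Rightarrow> 'e \<Rightarrow> 'e"   (* reindexing P(t) : P(Cod t) \<rightarrow> P(Dom t) *)

definition is_doctrine :: "('o,'a) cat \<Rightarrow> ('o,'a,'e) doctrine \<Rightarrow> bool" where
  "is_doctrine C P \<longleftrightarrow>
     (\<forall>X\<in>Obj C. (\<forall>a\<in>Car P X. Le P X a a) \<and>
        (\<forall>a\<in>Car P X. \<forall>b\<in>Car P X. Le P X a b \<longrightarrow> Le P X b a \<longrightarrow> a = b) \<and>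
        (\<forall>a\<in>Car P X. \<forall>b\<in>Car P X. \<forall>c\<in>Car P X. Le P X a b \<longrightarrow> Le P X b c \<longrightarrow> Le P X a c)) \<and>
     (\<forall>t\<in>Arr C. \<forall>a\<in>Car P (Cod C t). Rx P t a \<in> Car P (Dom C t)) \<and>
     (\<forall>t\<in>Arr C. \<forall>a\<in>Car P (Cod C t). \<forall>b\<in>Car P (Cod C t).
         Le P (Cod C t) a b \<longrightarrow> Le P (Dom C t) (Rx P t a) (Rx P t b)) \<and>
     (\<forall>X\<in>Obj C. \<forall>a\<in>Car P X. Rx P (Idm C X) a = a) \<and>
     (\<forall>f\<in>Arr C. \<forall>g\<in>Arr C. Cod C f = Dom C g \<longrightarrow>
         (\<forall>a\<in>Car P (Cod C g). Rx P (Cmp C g f) a = Rx P f (Rx P g a)))"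

definition reidx :: "('o2,'a2,'e) doctrine \<Rightarrow> ('o1 \<Rightarrow> 'o2) \<Rightarrow> ('a1 \<Rightarrow> 'a2) \<Rightarrow> ('o1,'a1,'e) doctrine" where
  "reidx Q Fo Fa = \<lparr>Car = (\<lambda>X. Car Q (Fo X)), Le = (\<lambda>X. Le Q (Fo X)), Rx = (\<lambda>t. Rx Q (Fa t))\<rparr>"

definition dnat :: "('o,'a) cat \<Rightarrow> ('o,'a,'e1) doctrine \<Rightarrow> ('o,'a,'e2) doctrine \<Rightarrow> ('o \<Rightarrow> 'e1 \<Rightarrow> 'e2) \<Rightarrow> bool" where
  "dnat C P Q f \<longleftrightarrow>
     (\<forall>X\<in>Obj C. \<forall>a\<in>Car P X. f X a \<in> Car Q X) \<and>
     (\<forall>X\<in>Obj C. \<forall>a\<in>Car P X. \<forall>b\<in>Car P X. Le P X a b \<longrightarrow> Le Q X (f X a) (f X b)) \<and>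
     (\<forall>t\<in>Arr C. \<forall>b\<in>Car P (Cod C t). f (Dom C t) (Rx P t b) = Rx Q t (f (Cod C t) b))"

definition idx_adj :: "('o1,'a1) cat \<Rightarrow> ('o2,'a2) cat \<Rightarrow> ('o1,'a1,'e1) doctrine \<Rightarrow> ('o2,'a2,'e2) doctrine
    \<Rightarrow> ('o1 \<Rightarrow> 'o2) \<Rightarrow> ('a1 \<Rightarrow> 'a2) \<Rightarrow> ('o1 \<Rightarrow> 'e1 \<Rightarrow> 'e2)
    \<Rightarrow> ('o2 \<Rightarrow> 'o1) \<Rightarrow> ('a2 \<Rightarrow> 'a1) \<Rightarrow> ('o2 \<Rightarrow> 'e2 \<Rightarrow> 'e1)
    \<Rightarrow> ('o1 \<Rightarrow> 'a1) \<Rightarrow> ('o2 \<Rightarrow> 'a2) \<Rightarrow> bool" where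
  "idx_adj C D P Q Lo La l Ro Ra r eta eps \<longleftrightarrow>
     cat_adj C D Lo La Ro Ra eta eps \<and> is_doctrine C P \<and> is_doctrine D Q \<and>
     dnat C P (reidx Q Lo La) l \<and> dnat D Q (reidx P Ro Ra) r \<and>
     (\<forall>X\<in>Obj C. \<forall>a\<in>Car P X. Le P X a (Rx P (eta X) (r (Lo X) (l X a)))) \<and>
     (\<forall>Y\<in>Obj D. \<forall>b\<in>Car Q Y. Le Q (Lo (Ro Y)) (l (Ro Y) (r Y b)) (Rx Q (eps Y) b))"

definition comp1 :: "('o2 \<Rightarrow> 'o3) \<Rightarrow> ('a2 \<Rightarrow> 'a3) \<Rightarrow> ('o2 \<Rightarrow> 'e2 \<Rightarrow> 'e3)
    \<Rightarrow> ('o1 \<Rightarrow> 'o2) \<Rightarrow> ('a1 \<Rightarrow> 'a2) \<Rightarrow> ('o1 \<Rightarrow> 'e1 \<Rightarrow> 'e2)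
    \<Rightarrow> ('o1 \<Rightarrow> 'o3) \<times> ('a1 \<Rightarrow> 'a3) \<times> ('o1 \<Rightarrow> 'e1 \<Rightarrow> 'e3)" where
  "comp1 Fo Fa f Go Ga g = (Fo \<circ> Go, Fa \<circ> Ga, (\<lambda>X a. f (Go X) (g X a)))"

definition arr_eq :: "('o1,'a1) cat \<Rightarrow> ('o1,'a1,'e1) doctrine
    \<Rightarrow> ('o1 \<Rightarrow> 'o2) \<times> ('a1 \<Rightarrow> 'a2) \<times> ('o1 \<Rightarrow> 'e1 \<Rightarrow> 'e2)
    \<Rightarrow> ('o1 \<Rightarrow> 'o2) \<times> ('a1 \<Rightarrow> 'a2) \<times> ('o1 \<Rightarrow> 'e1 \<Rightarrow> 'e2) \<Rightarrow> bool" where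
  "arr_eq C P F G \<longleftrightarrow>
     (\<forall>X\<in>Obj C. fst F X = fst G X) \<and>
     (\<forall>t\<in>Arr C. fst (snd F) t = fst (snd G) t) \<and>
     (\<forall>X\<in>Obj C. \<forall>a\<in>Car P X. snd (snd F) X a = snd (snd G) X a)"

definition fixdoc :: "('o2,'a2,'e) doctrine \<Rightarrow> ('o1 \<Rightarrow> 'o2) \<Rightarrow> ('a1 \<Rightarrow> 'a2) \<Rightarrow> ('o1 \<Rightarrow> 'e \<Rightarrow> 'e)
    \<Rightarrow> ('o1,'a1,'e) doctrine" where
  "fixdoc Q Lo La bx = \<lparr>Car = (\<lambda>X. {a \<in> Car Q (Lo X). bx X a = a}),
                        Le = (\<lambda>X. Le Q (Lo X)), Rx = (\<lambda>t. Rx Q (La t))\<rparr>"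

end

theory Submission
  imports Defs
begin

text \<open>
  Transposing \<open>(L,\<lambda>) \<turnstile> (R,\<rho>)\<close> along the unit gives an adjunction
  \<open>(Id,\<lambda>) \<turnstile> (Id,\<rho>')\<close> between \<open>P\<close> and \<open>QL\<^sup>o\<^sup>p\<close>, i.e. a natural family of Galois
  connections. For any such family \<open>l \<turnstile> r\<close> the composite \<open>\<box> = l r\<close> is an interior operator;
  the identities \<open>l r l = l\<close> and \<open>r l r = r\<close> show that its fixed points form a doctrine
  onto which \<open>l\<close> corestricts surjectively, on which \<open>r\<close> is injective, and whose
  inclusion is left adjoint to \<open>\<box>\<close>. The adjunction between \<open>\<box>QL\<^sup>o\<^sup>p\<close> and \<open>Q\<close> is the
  composite of the latter with the change-of-base adjunction \<open>(L,id) \<turnstile> (R,Q\<epsilon>\<^sup>o\<^sup>p)\<close>, and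
  the commutation of the right adjoints reduces to \<open>\<rho>' \<box> = \<rho>'\<close>.
\<close>

lemma category_Idm_hom: "category C \<Longrightarrow> X \<in> Obj C \<Longrightarrow> Idm C X \<in> hom C X X"
  unfolding category_def by blast

lemma category_Arr_hom:
  "category C \<Longrightarrow> t \<in> Arr C \<Longrightarrow> t \<in> hom C (Dom C t) (Cod C t) \<and> Dom C t \<in> Obj C \<and> Cod C t \<in> Obj C"
  unfolding category_def hom_def by blast

lemma category_Cmp_Idm:
  "category C \<Longrightarrow> f \<in> Arr C \<Longrightarrow> Cmp C (Idm C (Cod C f)) f = f \<and> Cmp C f (Idm C (Dom C f)) = f"
  unfolding category_def by blast

lemma functor_Obj: "functor C D Fo Fa \<Longrightarrow> X \<in> Obj C \<Longrightarrow> Fo X \<in> Obj D"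
  unfolding functor_def by blast

lemma functor_hom: "functor C D Fo Fa \<Longrightarrow> t \<in> hom C X Y \<Longrightarrow> Fa t \<in> hom D (Fo X) (Fo Y)"
  unfolding functor_def hom_def by blast

lemma functor_Idm: "functor C D Fo Fa \<Longrightarrow> X \<in> Obj C \<Longrightarrow> Fa (Idm C X) = Idm D (Fo X)"
  unfolding functor_def by blast

lemma functor_Cmp:
  assumes "functor C D Fo Fa" and "f \<in> hom C X Y" and "g \<in> hom C Y Z"
  shows "Fa (Cmp C g f) = Cmp D (Fa g) (Fa f)"
proof -
  have "f \<in> Arr C" "g \<in> Arr C" "Cod C f = Dom C g"
    using assms(2,3) by (simp_all add: hom_def)
  then show ?thesis
    using assms(1) unfolding functor_def by blast
qed

lemma functor_ident: "category C \<Longrightarrow> functor C C (\<lambda>X. X) (\<lambda>t. t)"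
  unfolding functor_def category_def hom_def by blast

lemma functor_comp:
  assumes F: "functor C D Fo Fa" and G: "functor D E Go Ga"
  shows "functor C E (\<lambda>X. Go (Fo X)) (\<lambda>t. Ga (Fa t))"
  unfolding functor_def[of C E]
proof (intro conjI ballI impI)
  fix X assume "X \<in> Obj C"
  then show "Go (Fo X) \<in> Obj E" and "Ga (Fa (Idm C X)) = Idm E (Go (Fo X))"
    by (simp_all add: functor_Obj[OF F] functor_Obj[OF G] functor_Idm[OF F] functor_Idm[OF G])
next
  fix f assume "f \<in> Arr C"
  then have "f \<in> hom C (Dom C f) (Cod C f)" by (simp add: hom_def)
  then show "Ga (Fa f) \<in> hom E (Go (Fo (Dom C f))) (Go (Fo (Cod C f)))"
    by (intro functor_hom[OF G] functor_hom[OF F])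
next
  fix f g assume "f \<in> Arr C" "g \<in> Arr C" "Cod C f = Dom C g"
  then have f: "f \<in> hom C (Dom C f) (Cod C f)" and g: "g \<in> hom C (Cod C f) (Cod C g)"
    by (simp_all add: hom_def)
  show "Ga (Fa (Cmp C g f)) = Cmp E (Ga (Fa g)) (Ga (Fa f))"
    using functor_Cmp[OF F f g] functor_Cmp[OF G functor_hom[OF F f] functor_hom[OF F g]] by simp
qed

lemma cat_adj_ident: "category C \<Longrightarrow> cat_adj C C (\<lambda>X. X) (\<lambda>t. t) (\<lambda>X. X) (\<lambda>t. t) (Idm C) (Idm C)"
proof -
  assume C: "category C"
  have "Cmp C (Idm C X) (Idm C X) = Idm C X" if "X \<in> Obj C" for X
    using category_Cmp_Idm[OF C, of "Idm C X"] category_Idm_hom[OF C that] by (simp add: hom_def)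
  then show ?thesis
    unfolding cat_adj_def by (simp add: C functor_ident category_Idm_hom category_Cmp_Idm)
qed

lemma doctrine_refl: "is_doctrine C P \<Longrightarrow> X \<in> Obj C \<Longrightarrow> a \<in> Car P X \<Longrightarrow> Le P X a a"
  unfolding is_doctrine_def by (drule conjunct1, drule bspec) blast+

lemma doctrine_antisym:
  "is_doctrine C P \<Longrightarrow> X \<in> Obj C \<Longrightarrow> a \<in> Car P X \<Longrightarrow> b \<in> Car P X \<Longrightarrow> Le P X a b \<Longrightarrow> Le P X b a
    \<Longrightarrow> a = b"
  unfolding is_doctrine_def by (drule conjunct1, drule bspec) blast+

lemma doctrine_trans:
  "is_doctrine C P \<Longrightarrow> X \<in> Obj C \<Longrightarrow> a \<in> Car P X \<Longrightarrow> b \<in> Car P X \<Longrightarrow> c \<in> Car P X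
    \<Longrightarrow> Le P X a b \<Longrightarrow> Le P X b c \<Longrightarrow> Le P X a c"
  unfolding is_doctrine_def by (drule conjunct1, drule bspec) blast+

lemma doctrine_Rx_closed:
  "is_doctrine C P \<Longrightarrow> t \<in> hom C X Y \<Longrightarrow> a \<in> Car P Y \<Longrightarrow> Rx P t a \<in> Car P X"
  unfolding is_doctrine_def hom_def by (drule conjunct2, drule conjunct1) blast

lemma doctrine_Rx_mono:
  "is_doctrine C P \<Longrightarrow> t \<in> hom C X Y \<Longrightarrow> a \<in> Car P Y \<Longrightarrow> b \<in> Car P Y \<Longrightarrow> Le P Y a b
    \<Longrightarrow> Le P X (Rx P t a) (Rx P t b)"
  unfolding is_doctrine_def hom_def by (drule conjunct2, drule conjunct2, drule conjunct1) blast

lemma doctrine_Rx_Idm: "is_doctrine C P \<Longrightarrow> X \<in> Obj C \<Longrightarrow> a \<in> Car P X \<Longrightarrow> Rx P (Idm C X) a = a"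
  unfolding is_doctrine_def by (drule conjunct2, drule conjunct2, drule conjunct2, drule conjunct1) blast

lemma doctrine_Rx_Cmp:
  assumes "is_doctrine C P" and "f \<in> hom C X Y" and "g \<in> hom C Y Z" and "a \<in> Car P Z"
  shows "Rx P (Cmp C g f) a = Rx P f (Rx P g a)"
proof -
  have "f \<in> Arr C" "g \<in> Arr C" "Cod C f = Dom C g" "a \<in> Car P (Cod C g)"
    using assms(2-4) by (simp_all add: hom_def)
  then show ?thesis
    using assms(1) unfolding is_doctrine_def by (elim conjE) blast
qed

lemma dnat_closed: "dnat C P Q f \<Longrightarrow> X \<in> Obj C \<Longrightarrow> a \<in> Car P X \<Longrightarrow> f X a \<in> Car Q X"
  unfolding dnat_def by blast

lemma dnat_mono:
  "dnat C P Q f \<Longrightarrow> X \<in> Obj C \<Longrightarrow> a \<in> Car P X \<Longrightarrow> b \<in> Car P X \<Longrightarrow> Le P X a b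
    \<Longrightarrow> Le Q X (f X a) (f X b)"
  unfolding dnat_def by blast

lemma dnat_natural:
  "dnat C P Q f \<Longrightarrow> t \<in> hom C X Y \<Longrightarrow> b \<in> Car P Y \<Longrightarrow> f X (Rx P t b) = Rx Q t (f Y b)"
  unfolding dnat_def hom_def by blast

lemma dnat_ident: "dnat C P P (\<lambda>X a. a)"
  unfolding dnat_def by simp

lemma dnat_comp:
  assumes C: "category C" and f: "dnat C P M f" and g: "dnat C M N g"
  shows "dnat C P N (\<lambda>X a. g X (f X a))"
  unfolding dnat_def[of C P N]
proof (intro conjI ballI impI)
  fix X a b assume "X \<in> Obj C" "a \<in> Car P X" "b \<in> Car P X"
  then show "g X (f X a) \<in> Car N X" and "Le P X a b \<Longrightarrow> Le N X (g X (f X a)) (g X (f X b))"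
    by (simp_all add: dnat_closed[OF f] dnat_closed[OF g] dnat_mono[OF f] dnat_mono[OF g])
next
  fix t b assume t: "t \<in> Arr C" and b: "b \<in> Car P (Cod C t)"
  have t_hom: "t \<in> hom C (Dom C t) (Cod C t)" and "Cod C t \<in> Obj C"
    using category_Arr_hom[OF C t] by blast+
  then have "f (Cod C t) b \<in> Car M (Cod C t)"
    using dnat_closed[OF f] b by blast
  then show "g (Dom C t) (f (Dom C t) (Rx P t b)) = Rx N t (g (Cod C t) (f (Cod C t) b))"
    using dnat_natural[OF f t_hom b] dnat_natural[OF g t_hom] by simp
qed

lemma reidx_ident [simp]: "reidx Q (\<lambda>X. X) (\<lambda>t. t) = Q"
  by (simp add: reidx_def)

lemma reidx_reidx: "reidx (reidx Q Go Ga) Fo Fa = reidx Q (\<lambda>X. Go (Fo X)) (\<lambda>t. Ga (Fa t))"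
  by (simp add: reidx_def)

lemma fixdoc_reidx: "fixdoc (reidx Q Fo Fa) (\<lambda>X. X) (\<lambda>t. t) k = fixdoc Q Fo Fa k"
  by (simp add: fixdoc_def reidx_def)

lemma is_doctrine_reidx:
  assumes Q: "is_doctrine D Q" and F: "functor C D Fo Fa"
  shows "is_doctrine C (reidx Q Fo Fa)"
  unfolding is_doctrine_def reidx_def doctrine.simps
proof (intro conjI ballI impI)
  fix X a b c assume X: "X \<in> Obj C" and "a \<in> Car Q (Fo X)" "b \<in> Car Q (Fo X)" "c \<in> Car Q (Fo X)"
  with functor_Obj[OF F X] show "Le Q (Fo X) a a"
    and "Le Q (Fo X) a b \<Longrightarrow> Le Q (Fo X) b a \<Longrightarrow> a = b"
    and "Le Q (Fo X) a b \<Longrightarrow> Le Q (Fo X) b c \<Longrightarrow> Le Q (Fo X) a c"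
    using doctrine_refl[OF Q] doctrine_antisym[OF Q] doctrine_trans[OF Q] by blast+
  show "Rx Q (Fa (Idm C X)) a = a"
    using functor_Idm[OF F X] doctrine_Rx_Idm[OF Q functor_Obj[OF F X]] \<open>a \<in> Car Q (Fo X)\<close> by simp
next
  fix t a b assume "t \<in> Arr C" "a \<in> Car Q (Fo (Cod C t))" "b \<in> Car Q (Fo (Cod C t))"
  moreover have "Fa t \<in> hom D (Fo (Dom C t)) (Fo (Cod C t))"
    using functor_hom[OF F] \<open>t \<in> Arr C\<close> by (simp add: hom_def)
  ultimately show "Rx Q (Fa t) a \<in> Car Q (Fo (Dom C t))"
    and "Le Q (Fo (Cod C t)) a b \<Longrightarrow> Le Q (Fo (Dom C t)) (Rx Q (Fa t) a) (Rx Q (Fa t) b)"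
    using doctrine_Rx_closed[OF Q] doctrine_Rx_mono[OF Q] by blast+
next
  fix f g a assume "f \<in> Arr C" "g \<in> Arr C" "Cod C f = Dom C g" "a \<in> Car Q (Fo (Cod C g))"
  then have f: "f \<in> hom C (Dom C f) (Dom C g)" and g: "g \<in> hom C (Dom C g) (Cod C g)"
    by (simp_all add: hom_def)
  show "Rx Q (Fa (Cmp C g f)) a = Rx Q (Fa f) (Rx Q (Fa g) a)"
    using functor_Cmp[OF F f g] doctrine_Rx_Cmp[OF Q functor_hom[OF F f] functor_hom[OF F g]]
      \<open>a \<in> Car Q (Fo (Cod C g))\<close> by simp
qed

lemma dnat_reidx:
  assumes f: "dnat D P Q f" and F: "functor C D Fo Fa"
  shows "dnat C (reidx P Fo Fa) (reidx Q Fo Fa) (\<lambda>X. f (Fo X))"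
  unfolding dnat_def reidx_def doctrine.simps
proof (intro conjI ballI impI)
  fix X a b assume "X \<in> Obj C" "a \<in> Car P (Fo X)" "b \<in> Car P (Fo X)"
  with functor_Obj[OF F] show "f (Fo X) a \<in> Car Q (Fo X)"
    and "Le P (Fo X) a b \<Longrightarrow> Le Q (Fo X) (f (Fo X) a) (f (Fo X) b)"
    by (simp_all add: dnat_closed[OF f] dnat_mono[OF f])
next
  fix t b assume "t \<in> Arr C" "b \<in> Car P (Fo (Cod C t))"
  moreover have "Fa t \<in> hom D (Fo (Dom C t)) (Fo (Cod C t))"
    using functor_hom[OF F] \<open>t \<in> Arr C\<close> by (simp add: hom_def)
  ultimately show "f (Fo (Dom C t)) (Rx P (Fa t) b) = Rx Q (Fa t) (f (Fo (Cod C t)) b)"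
    using dnat_natural[OF f] by blast
qed

lemma dnat_Rx_nat_trans:
  assumes C: "category C" and P: "is_doctrine E P"
    and F: "functor C E Fo Fa" and G: "functor C E Go Ga"
    and \<theta>: "\<And>X. X \<in> Obj C \<Longrightarrow> \<theta> X \<in> hom E (Fo X) (Go X)"
    and natural: "\<And>t. t \<in> Arr C \<Longrightarrow> Cmp E (Ga t) (\<theta> (Dom C t)) = Cmp E (\<theta> (Cod C t)) (Fa t)"
  shows "dnat C (reidx P Go Ga) (reidx P Fo Fa) (\<lambda>X. Rx P (\<theta> X))"
  unfolding dnat_def reidx_def doctrine.simps
proof (intro conjI ballI impI)
  fix X a b assume X: "X \<in> Obj C" and "a \<in> Car P (Go X)" "b \<in> Car P (Go X)"
  then show "Rx P (\<theta> X) a \<in> Car P (Fo X)"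
    and "Le P (Go X) a b \<Longrightarrow> Le P (Fo X) (Rx P (\<theta> X) a) (Rx P (\<theta> X) b)"
    using doctrine_Rx_closed[OF P \<theta>[OF X]] doctrine_Rx_mono[OF P \<theta>[OF X]] by blast+
next
  fix t b assume t: "t \<in> Arr C" and b: "b \<in> Car P (Go (Cod C t))"
  then have "t \<in> hom C (Dom C t) (Cod C t)" "Dom C t \<in> Obj C" "Cod C t \<in> Obj C"
    using category_Arr_hom[OF C] by blast+
  then have Ft: "Fa t \<in> hom E (Fo (Dom C t)) (Fo (Cod C t))"
    and Gt: "Ga t \<in> hom E (Go (Dom C t)) (Go (Cod C t))"
    and \<theta>s: "\<theta> (Dom C t) \<in> hom E (Fo (Dom C t)) (Go (Dom C t))"
      "\<theta> (Cod C t) \<in> hom E (Fo (Cod C t)) (Go (Cod C t))"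
    using functor_hom[OF F] functor_hom[OF G] \<theta> by blast+
  have "Rx P (\<theta> (Dom C t)) (Rx P (Ga t) b) = Rx P (Cmp E (Ga t) (\<theta> (Dom C t))) b"
    using doctrine_Rx_Cmp[OF P \<theta>s(1) Gt b] by simp
  also have "\<dots> = Rx P (Cmp E (\<theta> (Cod C t)) (Fa t)) b"
    using natural[OF t] by simp
  also have "\<dots> = Rx P (Fa t) (Rx P (\<theta> (Cod C t)) b)"
    using doctrine_Rx_Cmp[OF P Ft \<theta>s(2) b] by simp
  finally show "Rx P (\<theta> (Dom C t)) (Rx P (Ga t) b) = Rx P (Fa t) (Rx P (\<theta> (Cod C t)) b)" .
qed

lemma is_doctrine_fixdoc:
  assumes M: "is_doctrine C M" and k: "dnat C M M k"
  shows "is_doctrine C (fixdoc M (\<lambda>X. X) (\<lambda>t. t) k)"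
  unfolding is_doctrine_def fixdoc_def doctrine.simps
proof (intro conjI ballI impI)
  fix X a b c assume "X \<in> Obj C" and "a \<in> {a \<in> Car M X. k X a = a}"
    and "b \<in> {b \<in> Car M X. k X b = b}" and "c \<in> {c \<in> Car M X. k X c = c}"
  then show "Le M X a a" and "Le M X a b \<Longrightarrow> Le M X b a \<Longrightarrow> a = b"
    and "Le M X a b \<Longrightarrow> Le M X b c \<Longrightarrow> Le M X a c" and "Rx M (Idm C X) a = a"
    using doctrine_refl[OF M] doctrine_antisym[OF M] doctrine_trans[OF M] doctrine_Rx_Idm[OF M]
    by blast+
next
  fix t a b assume t: "t \<in> Arr C" and a: "a \<in> {a \<in> Car M (Cod C t). k (Cod C t) a = a}"
    and b: "b \<in> {b \<in> Car M (Cod C t). k (Cod C t) b = b}"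
  have t_hom: "t \<in> hom C (Dom C t) (Cod C t)" using t by (simp add: hom_def)
  show "Rx M t a \<in> {a \<in> Car M (Dom C t). k (Dom C t) a = a}"
    using doctrine_Rx_closed[OF M t_hom] dnat_natural[OF k t_hom] a by simp
  show "Le M (Cod C t) a b \<Longrightarrow> Le M (Dom C t) (Rx M t a) (Rx M t b)"
    using doctrine_Rx_mono[OF M t_hom] a b by blast
next
  fix f g a assume "f \<in> Arr C" "g \<in> Arr C" "Cod C f = Dom C g"
    and "a \<in> {a \<in> Car M (Cod C g). k (Cod C g) a = a}"
  then show "Rx M (Cmp C g f) a = Rx M f (Rx M g a)"
    using doctrine_Rx_Cmp[OF M, of f "Dom C f" "Dom C g" g "Cod C g" a] by (simp add: hom_def)
qed

lemma cat_adj_functor_left: "cat_adj C D Lo La Ro Ra eta eps \<Longrightarrow> functor C D Lo La"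
  unfolding cat_adj_def by blast

lemma cat_adj_functor_right: "cat_adj C D Lo La Ro Ra eta eps \<Longrightarrow> functor D C Ro Ra"
  unfolding cat_adj_def by blast

lemma cat_adj_unit_hom: "cat_adj C D Lo La Ro Ra eta eps \<Longrightarrow> X \<in> Obj C \<Longrightarrow> eta X \<in> hom C X (Ro (Lo X))"
  unfolding cat_adj_def by blast

lemma cat_adj_counit_hom: "cat_adj C D Lo La Ro Ra eta eps \<Longrightarrow> Y \<in> Obj D \<Longrightarrow> eps Y \<in> hom D (Lo (Ro Y)) Y"
  unfolding cat_adj_def by blast

lemma cat_adj_Rx_triangle:
  assumes adj: "cat_adj C D Lo La Ro Ra eta eps" and Q: "is_doctrine D Q"
    and X: "X \<in> Obj C" and c: "c \<in> Car Q (Lo X)"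
  shows "Rx Q (La (eta X)) (Rx Q (eps (Lo X)) c) = c"
proof -
  have LX: "Lo X \<in> Obj D"
    using functor_Obj[OF cat_adj_functor_left[OF adj] X] .
  have "Rx Q (La (eta X)) (Rx Q (eps (Lo X)) c) = Rx Q (Cmp D (eps (Lo X)) (La (eta X))) c"
    using doctrine_Rx_Cmp[OF Q functor_hom[OF cat_adj_functor_left[OF adj] cat_adj_unit_hom[OF adj X]]
        cat_adj_counit_hom[OF adj LX] c] ..
  also have "\<dots> = Rx Q (Idm D (Lo X)) c"
    using adj X unfolding cat_adj_def by simp
  also have "\<dots> = c"
    using doctrine_Rx_Idm[OF Q LX c] .
  finally show ?thesis .
qed

lemma cat_adj_dnat_Rx_unit:
  assumes C: "category C" and adj: "cat_adj C D Lo La Ro Ra eta eps" and P: "is_doctrine C P"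
  shows "dnat C (reidx P (\<lambda>X. Ro (Lo X)) (\<lambda>t. Ra (La t))) P (\<lambda>X. Rx P (eta X))"
  using dnat_Rx_nat_trans[OF C P functor_ident[OF C]
      functor_comp[OF cat_adj_functor_left[OF adj] cat_adj_functor_right[OF adj]]
      cat_adj_unit_hom[OF adj]] adj
  unfolding cat_adj_def by simp

lemma cat_adj_dnat_Rx_counit:
  assumes D: "category D" and adj: "cat_adj C D Lo La Ro Ra eta eps" and Q: "is_doctrine D Q"
  shows "dnat D Q (reidx Q (\<lambda>Y. Lo (Ro Y)) (\<lambda>s. La (Ra s))) (\<lambda>Y. Rx Q (eps Y))"
  using dnat_Rx_nat_trans[OF D Q functor_comp[OF cat_adj_functor_right[OF adj] cat_adj_functor_left[OF adj]]
      functor_ident[OF D] cat_adj_counit_hom[OF adj]] adj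
  unfolding cat_adj_def by simp

lemma idx_adj_cat_adj: "idx_adj C D P Q Lo La l Ro Ra r eta eps \<Longrightarrow> cat_adj C D Lo La Ro Ra eta eps"
  unfolding idx_adj_def by blast

lemma idx_adj_doctrines: "idx_adj C D P Q Lo La l Ro Ra r eta eps \<Longrightarrow> is_doctrine C P \<and> is_doctrine D Q"
  unfolding idx_adj_def by blast

lemma idx_adj_dnat_left: "idx_adj C D P Q Lo La l Ro Ra r eta eps \<Longrightarrow> dnat C P (reidx Q Lo La) l"
  unfolding idx_adj_def by blast

lemma idx_adj_dnat_right: "idx_adj C D P Q Lo La l Ro Ra r eta eps \<Longrightarrow> dnat D Q (reidx P Ro Ra) r"
  unfolding idx_adj_def by blast

lemma idx_adj_unit:
  "idx_adj C D P Q Lo La l Ro Ra r eta eps \<Longrightarrow> X \<in> Obj C \<Longrightarrow> a \<in> Car P X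
    \<Longrightarrow> Le P X a (Rx P (eta X) (r (Lo X) (l X a)))"
  unfolding idx_adj_def by blast

lemma idx_adj_counit:
  "idx_adj C D P Q Lo La l Ro Ra r eta eps \<Longrightarrow> Y \<in> Obj D \<Longrightarrow> b \<in> Car Q Y
    \<Longrightarrow> Le Q (Lo (Ro Y)) (l (Ro Y) (r Y b)) (Rx Q (eps Y) b)"
  unfolding idx_adj_def by blast

lemma idx_adj_change_of_base:
  assumes C: "category C" and D: "category D"
    and adj: "cat_adj C D Lo La Ro Ra eta eps" and Q: "is_doctrine D Q"
  shows "idx_adj C D (reidx Q Lo La) Q Lo La (\<lambda>X a. a) Ro Ra (\<lambda>Y b. Rx Q (eps Y) b) eta eps"
proof -
  have L: "functor C D Lo La" and R: "functor D C Ro Ra"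
    using cat_adj_functor_left[OF adj] cat_adj_functor_right[OF adj] .
  have unit: "Le Q (Lo X) a (Rx Q (La (eta X)) (Rx Q (eps (Lo X)) a))"
    if "X \<in> Obj C" "a \<in> Car Q (Lo X)" for X a
    using cat_adj_Rx_triangle[OF adj Q that] doctrine_refl[OF Q functor_Obj[OF L]] that by simp
  have counit: "Le Q (Lo (Ro Y)) (Rx Q (eps Y) b) (Rx Q (eps Y) b)"
    if "Y \<in> Obj D" "b \<in> Car Q Y" for Y b
    using doctrine_refl[OF Q functor_Obj[OF L functor_Obj[OF R]]]
      doctrine_Rx_closed[OF Q cat_adj_counit_hom[OF adj]] that by blast
  show ?thesis
    unfolding idx_adj_def
    using adj is_doctrine_reidx[OF Q L] Q dnat_ident cat_adj_dnat_Rx_counit[OF D adj Q] unit counit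
    by (simp add: reidx_def)
qed

lemma idx_adj_transposed_counit:
  assumes adj: "idx_adj C D P Q Lo La lam Ro Ra rho eta eps"
    and X: "X \<in> Obj C" and c: "c \<in> Car Q (Lo X)"
  shows "Le Q (Lo X) (lam X (Rx P (eta X) (rho (Lo X) c))) c"
proof -
  have cadj: "cat_adj C D Lo La Ro Ra eta eps" and Q: "is_doctrine D Q"
    using idx_adj_cat_adj[OF adj] idx_adj_doctrines[OF adj] by blast+
  have LX: "Lo X \<in> Obj D"
    using functor_Obj[OF cat_adj_functor_left[OF cadj] X] .
  have eta: "eta X \<in> hom C X (Ro (Lo X))"
    using cat_adj_unit_hom[OF cadj X] .
  have L_eta: "La (eta X) \<in> hom D (Lo X) (Lo (Ro (Lo X)))"
    using functor_hom[OF cat_adj_functor_left[OF cadj] eta] .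
  have d: "rho (Lo X) c \<in> Car P (Ro (Lo X))"
    using dnat_closed[OF idx_adj_dnat_right[OF adj] LX] c by (simp add: reidx_def)
  have lam_d: "lam (Ro (Lo X)) (rho (Lo X) c) \<in> Car Q (Lo (Ro (Lo X)))"
    using dnat_closed[OF idx_adj_dnat_left[OF adj] functor_Obj[OF cat_adj_functor_right[OF cadj] LX] d]
    by (simp add: reidx_def)
  have eps_c: "Rx Q (eps (Lo X)) c \<in> Car Q (Lo (Ro (Lo X)))"
    using doctrine_Rx_closed[OF Q cat_adj_counit_hom[OF cadj LX] c] .
  have "lam X (Rx P (eta X) (rho (Lo X) c)) = Rx Q (La (eta X)) (lam (Ro (Lo X)) (rho (Lo X) c))"
    using dnat_natural[OF idx_adj_dnat_left[OF adj] eta d] by (simp add: reidx_def)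
  moreover have "Le Q (Lo X) (Rx Q (La (eta X)) (lam (Ro (Lo X)) (rho (Lo X) c)))
      (Rx Q (La (eta X)) (Rx Q (eps (Lo X)) c))"
    using doctrine_Rx_mono[OF Q L_eta lam_d eps_c idx_adj_counit[OF adj LX c]] .
  moreover have "Rx Q (La (eta X)) (Rx Q (eps (Lo X)) c) = c"
    using cat_adj_Rx_triangle[OF cadj Q X c] .
  ultimately show ?thesis
    by simp
qed

lemma idx_adj_transpose:
  assumes C: "category C" and D: "category D" and adj: "idx_adj C D P Q Lo La lam Ro Ra rho eta eps"
  shows "idx_adj C C P (reidx Q Lo La) (\<lambda>X. X) (\<lambda>t. t) lam (\<lambda>X. X) (\<lambda>t. t)
    (\<lambda>X a. Rx P (eta X) (rho (Lo X) a)) (Idm C) (Idm C)"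
proof -
  have cadj: "cat_adj C D Lo La Ro Ra eta eps" and P: "is_doctrine C P" and Q: "is_doctrine D Q"
    using idx_adj_cat_adj[OF adj] idx_adj_doctrines[OF adj] by blast+
  have L: "functor C D Lo La"
    using cat_adj_functor_left[OF cadj] .
  have rho_L: "dnat C (reidx Q Lo La) (reidx P (\<lambda>X. Ro (Lo X)) (\<lambda>t. Ra (La t))) (\<lambda>X. rho (Lo X))"
    using dnat_reidx[OF idx_adj_dnat_right[OF adj] L] by (simp only: reidx_reidx)
  have rho': "dnat C (reidx Q Lo La) P (\<lambda>X a. Rx P (eta X) (rho (Lo X) a))"
    using dnat_comp[OF C rho_L cat_adj_dnat_Rx_unit[OF C cadj P]] .
  have unit: "Le P X a (Rx P (Idm C X) (Rx P (eta X) (rho (Lo X) (lam X a))))"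
    if "X \<in> Obj C" "a \<in> Car P X" for X a
    using idx_adj_unit[OF adj that] doctrine_Rx_Idm[OF P that(1)] dnat_closed[OF rho' that(1)]
      dnat_closed[OF idx_adj_dnat_left[OF adj] that] by simp
  have counit: "Le Q (Lo X) (lam X (Rx P (eta X) (rho (Lo X) c))) (Rx Q (La (Idm C X)) c)"
    if "X \<in> Obj C" "c \<in> Car Q (Lo X)" for X c
    using idx_adj_transposed_counit[OF adj that] functor_Idm[OF L that(1)]
      doctrine_Rx_Idm[OF Q functor_Obj[OF L that(1)] that(2)] by simp
  show ?thesis
    unfolding idx_adj_def reidx_ident
    using cat_adj_ident[OF C] P is_doctrine_reidx[OF Q L] idx_adj_dnat_left[OF adj] rho' unit counit
    by (simp add: reidx_def)
qed

locale fibred_galois_connection =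
  fixes C :: "('o,'a) cat" and P :: "('o,'a,'e1) doctrine" and M :: "('o,'a,'e2) doctrine"
    and l :: "'o \<Rightarrow> 'e1 \<Rightarrow> 'e2" and r :: "'o \<Rightarrow> 'e2 \<Rightarrow> 'e1"
  assumes category: "category C"
    and adjunction: "idx_adj C C P M (\<lambda>X. X) (\<lambda>t. t) l (\<lambda>X. X) (\<lambda>t. t) r (Idm C) (Idm C)"
begin

lemma doctrine_P: "is_doctrine C P" and doctrine_M: "is_doctrine C M"
  using idx_adj_doctrines[OF adjunction] by blast+

lemma dnat_l: "dnat C P M l" and dnat_r: "dnat C M P r"
  using idx_adj_dnat_left[OF adjunction] idx_adj_dnat_right[OF adjunction] by simp_all

lemma l_closed: "X \<in> Obj C \<Longrightarrow> a \<in> Car P X \<Longrightarrow> l X a \<in> Car M X"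
  using dnat_closed[OF dnat_l] .

lemma r_closed: "X \<in> Obj C \<Longrightarrow> b \<in> Car M X \<Longrightarrow> r X b \<in> Car P X"
  using dnat_closed[OF dnat_r] .

lemma unit_le: "X \<in> Obj C \<Longrightarrow> a \<in> Car P X \<Longrightarrow> Le P X a (r X (l X a))"
  using idx_adj_unit[OF adjunction] doctrine_Rx_Idm[OF doctrine_P] l_closed r_closed by simp

lemma counit_le: "X \<in> Obj C \<Longrightarrow> b \<in> Car M X \<Longrightarrow> Le M X (l X (r X b)) b"
  using idx_adj_counit[OF adjunction] doctrine_Rx_Idm[OF doctrine_M] by simp

lemma l_r_l: "X \<in> Obj C \<Longrightarrow> a \<in> Car P X \<Longrightarrow> l X (r X (l X a)) = l X a"
  using doctrine_antisym[OF doctrine_M] counit_le l_closed r_closed dnat_mono[OF dnat_l] unit_le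
  by meson

lemma r_l_r: "X \<in> Obj C \<Longrightarrow> b \<in> Car M X \<Longrightarrow> r X (l X (r X b)) = r X b"
  using doctrine_antisym[OF doctrine_P] counit_le l_closed r_closed dnat_mono[OF dnat_r] unit_le
  by meson

abbreviation box :: "'o \<Rightarrow> 'e2 \<Rightarrow> 'e2" where
  "box \<equiv> \<lambda>X b. l X (r X b)"

abbreviation Fix :: "('o,'a,'e2) doctrine" where
  "Fix \<equiv> fixdoc M (\<lambda>X. X) (\<lambda>t. t) box"

lemma dnat_box: "dnat C M M box"
  using dnat_comp[OF category dnat_r dnat_l] .

lemma doctrine_Fix: "is_doctrine C Fix"
  using is_doctrine_fixdoc[OF doctrine_M dnat_box] .

lemma box_fixed: "X \<in> Obj C \<Longrightarrow> b \<in> Car M X \<Longrightarrow> box X b \<in> Car Fix X"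
  using l_closed r_closed l_r_l by (simp add: fixdoc_def)

lemma idx_adj_Fix:
  "idx_adj C C P Fix (\<lambda>X. X) (\<lambda>t. t) l (\<lambda>X. X) (\<lambda>t. t) r (Idm C) (Idm C)"
proof -
  have "Le M X b (Rx M (Idm C X) b)" if "X \<in> Obj C" "b \<in> Car M X" for X b
    using doctrine_refl[OF doctrine_M that] doctrine_Rx_Idm[OF doctrine_M that] by simp
  then show ?thesis
    using adjunction doctrine_Fix l_r_l l_closed
    unfolding idx_adj_def dnat_def by (simp add: fixdoc_def)
qed

lemma idx_adj_Fix_inclusion:
  "idx_adj C C Fix M (\<lambda>X. X) (\<lambda>t. t) (\<lambda>X a. a) (\<lambda>X. X) (\<lambda>t. t) box (Idm C) (Idm C)"
proof -
  have inclusion: "dnat C Fix M (\<lambda>X a. a)"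
    unfolding dnat_def by (simp add: fixdoc_def)
  have "dnat C M Fix box"
    using dnat_box box_fixed unfolding dnat_def by (simp add: fixdoc_def)
  moreover have "Le M X b (Rx M (Idm C X) (box X b))" if "X \<in> Obj C" "b \<in> Car Fix X" for X b
    using that doctrine_refl[OF doctrine_M] doctrine_Rx_Idm[OF doctrine_M] by (simp add: fixdoc_def)
  moreover have "Le M X (box X b) (Rx M (Idm C X) b)" if "X \<in> Obj C" "b \<in> Car M X" for X b
    using counit_le[OF that] doctrine_Rx_Idm[OF doctrine_M that] by simp
  ultimately show ?thesis
    unfolding idx_adj_def reidx_ident
    using cat_adj_ident[OF category] doctrine_Fix doctrine_M inclusion by (simp add: fixdoc_def)
qed

lemma l_onto_Fix:
  assumes "X \<in> Obj C" and "b \<in> Car Fix X"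
  shows "\<exists>a\<in>Car P X. l X a = b"
proof
  show "r X b \<in> Car P X" and "l X (r X b) = b"
    using assms r_closed by (simp_all add: fixdoc_def)
qed

lemma inj_on_r_Fix: "inj_on (r X) (Car Fix X)"
proof (rule inj_onI)
  fix a b assume "a \<in> Car Fix X" "b \<in> Car Fix X" "r X a = r X b"
  then show "a = b"
    by (simp add: fixdoc_def)
qed

lemma idx_adj_comp:
  assumes D: "category D" and adj: "idx_adj C D M Q Lo La l' Ro Ra r' eta eps"
  shows "idx_adj C D P Q Lo La (\<lambda>X a. l' X (l X a)) Ro Ra (\<lambda>Y b. r (Ro Y) (r' Y b)) eta eps"
proof -
  have cadj: "cat_adj C D Lo La Ro Ra eta eps" and Q: "is_doctrine D Q"
    using idx_adj_cat_adj[OF adj] idx_adj_doctrines[OF adj] by blast+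
  have L: "functor C D Lo La" and R: "functor D C Ro Ra"
    using cat_adj_functor_left[OF cadj] cat_adj_functor_right[OF cadj] .
  have l': "dnat C M (reidx Q Lo La) l'" and r': "dnat D Q (reidx M Ro Ra) r'"
    using idx_adj_dnat_left[OF adj] idx_adj_dnat_right[OF adj] .
  have unit: "Le P X a (Rx P (eta X) (r (Ro (Lo X)) (r' (Lo X) (l' X (l X a)))))"
    if X: "X \<in> Obj C" and a: "a \<in> Car P X" for X a
  proof -
    define m where "m = l X a"
    define n where "n = r' (Lo X) (l' X m)"
    have m: "m \<in> Car M X"
      unfolding m_def using l_closed[OF X a] .
    have eta: "eta X \<in> hom C X (Ro (Lo X))"
      using cat_adj_unit_hom[OF cadj X] .
    have n: "n \<in> Car M (Ro (Lo X))"
      unfolding n_def using dnat_closed[OF r' functor_Obj[OF L X]] dnat_closed[OF l' X m]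
      by (simp add: reidx_def)
    have eta_n: "Rx M (eta X) n \<in> Car M X"
      using doctrine_Rx_closed[OF doctrine_M eta n] .
    have "Le M X m (Rx M (eta X) n)"
      unfolding n_def using idx_adj_unit[OF adj X m] .
    then have "Le P X (r X m) (r X (Rx M (eta X) n))"
      by (rule dnat_mono[OF dnat_r X m eta_n])
    then have "Le P X a (r X (Rx M (eta X) n))"
      using doctrine_trans[OF doctrine_P X a r_closed[OF X m] r_closed[OF X eta_n]] unit_le[OF X a]
      unfolding m_def by blast
    then show ?thesis
      unfolding n_def m_def dnat_natural[OF dnat_r eta n[unfolded n_def m_def]] .
  qed
  have counit: "Le Q (Lo (Ro Y)) (l' (Ro Y) (l (Ro Y) (r (Ro Y) (r' Y b)))) (Rx Q (eps Y) b)"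
    if Y: "Y \<in> Obj D" and b: "b \<in> Car Q Y" for Y b
  proof -
    define Z where "Z = Ro Y"
    define n where "n = r' Y b"
    have Z: "Z \<in> Obj C"
      unfolding Z_def using functor_Obj[OF R Y] .
    have n: "n \<in> Car M Z"
      unfolding n_def Z_def using dnat_closed[OF r' Y b] by (simp add: reidx_def)
    have "Le Q (Lo Z) (l' Z (box Z n)) (l' Z n)"
      using dnat_mono[OF l' Z l_closed[OF Z r_closed[OF Z n]] n counit_le[OF Z n]]
      by (simp add: reidx_def)
    moreover have "Le Q (Lo Z) (l' Z n) (Rx Q (eps Y) b)"
      unfolding Z_def n_def using idx_adj_counit[OF adj Y b] .
    ultimately show ?thesis
      using doctrine_trans[OF Q functor_Obj[OF L Z]] dnat_closed[OF l' Z] l_closed[OF Z] r_closed[OF Z n] n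
        doctrine_Rx_closed[OF Q cat_adj_counit_hom[OF cadj Y] b]
      unfolding Z_def n_def by (simp add: reidx_def) blast
  qed
  show ?thesis
    unfolding idx_adj_def
    using cadj doctrine_P Q dnat_comp[OF category dnat_l l']
      dnat_comp[OF D r' dnat_reidx[OF dnat_r R]] unit counit by blast
qed

end

theorem theorem7p6:
  fixes C :: "('o1,'a1) cat" and D :: "('o2,'a2) cat"
    and P :: "('o1,'a1,'e1) doctrine" and Q :: "('o2,'a2,'e2) doctrine"
    and Lo :: "'o1 \<Rightarrow> 'o2" and La :: "'a1 \<Rightarrow> 'a2" and lam :: "'o1 \<Rightarrow> 'e1 \<Rightarrow> 'e2"
    and Ro :: "'o2 \<Rightarrow> 'o1" and Ra :: "'a2 \<Rightarrow> 'a1" and rho :: "'o2 \<Rightarrow> 'e2 \<Rightarrow> 'e1"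
    and eta :: "'o1 \<Rightarrow> 'a1" and eps :: "'o2 \<Rightarrow> 'a2"
  assumes "category C" and "category D"
    and "is_doctrine C P" and "is_doctrine D Q"
    and adj: "idx_adj C D P Q Lo La lam Ro Ra rho eta eps"
  defines "rho' \<equiv> (\<lambda>X a. Rx P (eta X) (rho (Lo X) a))"
    and "box \<equiv> (\<lambda>X a. lam X (Rx P (eta X) (rho (Lo X) a)))"
    and "QL \<equiv> reidx Q Lo La"
    and "BQL \<equiv> fixdoc Q Lo La (\<lambda>X a. lam X (Rx P (eta X) (rho (Lo X) a)))"
    and "iota \<equiv> (\<lambda>(X::'o1) (a::'e2). a)"
    and "idQ \<equiv> (\<lambda>(X::'o1) (a::'e2). a)"
    and "rB \<equiv> (\<lambda>Y b. lam (Ro Y) (Rx P (eta (Ro Y)) (rho (Lo (Ro Y)) (Rx Q (eps Y) b))))"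
    and "rQ \<equiv> (\<lambda>Y b. Rx Q (eps Y) b)"
  shows
    \<comment> \<open>the five adjunctions of the diagram\<close>
    "idx_adj C C P BQL (\<lambda>X. X) (\<lambda>t. t) lam (\<lambda>X. X) (\<lambda>t. t) rho' (Idm C) (Idm C)
   \<and> idx_adj C C P QL (\<lambda>X. X) (\<lambda>t. t) lam (\<lambda>X. X) (\<lambda>t. t) rho' (Idm C) (Idm C)
   \<and> idx_adj C C BQL QL (\<lambda>X. X) (\<lambda>t. t) iota (\<lambda>X. X) (\<lambda>t. t) box (Idm C) (Idm C)
   \<and> idx_adj C D BQL Q Lo La iota Ro Ra rB eta eps
   \<and> idx_adj C D QL Q Lo La idQ Ro Ra rQ eta eps
   \<comment> \<open>commutation, left adjoints\<close>
   \<and> arr_eq C P (comp1 Lo La iota (\<lambda>X. X) (\<lambda>t. t) lam) (comp1 Lo La idQ (\<lambda>X. X) (\<lambda>t. t) lam)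
   \<and> arr_eq C P (comp1 (\<lambda>X. X) (\<lambda>t. t) iota (\<lambda>X. X) (\<lambda>t. t) lam) ((\<lambda>X. X), (\<lambda>t. t), lam)
   \<and> arr_eq C BQL (comp1 Lo La idQ (\<lambda>X. X) (\<lambda>t. t) iota) (Lo, La, iota)
   \<comment> \<open>commutation, right adjoints\<close>
   \<and> arr_eq D Q (comp1 (\<lambda>X. X) (\<lambda>t. t) rho' Ro Ra rB) (comp1 (\<lambda>X. X) (\<lambda>t. t) rho' Ro Ra rQ)
   \<and> arr_eq C QL (comp1 (\<lambda>X. X) (\<lambda>t. t) rho' (\<lambda>X. X) (\<lambda>t. t) box) ((\<lambda>X. X), (\<lambda>t. t), rho')
   \<and> arr_eq D Q (comp1 (\<lambda>X. X) (\<lambda>t. t) box Ro Ra rQ) (Ro, Ra, rB)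
   \<comment> \<open>lambda surjective onto fixed points, rho' injective on them\<close>
   \<and> (\<forall>X\<in>Obj C. \<forall>b\<in>Car BQL X. \<exists>a\<in>Car P X. lam X a = b)
   \<and> (\<forall>X\<in>Obj C. inj_on (rho' X) (Car BQL X))"
proof -
  note C = \<open>category C\<close> and D = \<open>category D\<close>
  have cadj: "cat_adj C D Lo La Ro Ra eta eps"
    using idx_adj_cat_adj[OF adj] .
  have adj_QL: "idx_adj C C P QL (\<lambda>X. X) (\<lambda>t. t) lam (\<lambda>X. X) (\<lambda>t. t) rho' (Idm C) (Idm C)"
    unfolding QL_def rho'_def using idx_adj_transpose[OF C D adj] .
  interpret G: fibred_galois_connection C P QL lam rho'
    using C adj_QL by unfold_locales
  have box: "box = G.box" and BQL: "BQL = G.Fix"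
    by (simp_all add: box_def rho'_def BQL_def QL_def fixdoc_reidx)
  have adj_BQL_QL: "idx_adj C C BQL QL (\<lambda>X. X) (\<lambda>t. t) iota (\<lambda>X. X) (\<lambda>t. t) box (Idm C) (Idm C)"
    unfolding box BQL iota_def using G.idx_adj_Fix_inclusion .
  interpret B: fibred_galois_connection C BQL QL iota box
    using C adj_BQL_QL by unfold_locales
  have adj_QL_Q: "idx_adj C D QL Q Lo La idQ Ro Ra rQ eta eps"
    unfolding QL_def idQ_def rQ_def using idx_adj_change_of_base[OF C D cadj \<open>is_doctrine D Q\<close>] .
  have rB: "rB = (\<lambda>Y b. box (Ro Y) (rQ Y b))"
    by (simp add: rB_def box_def rQ_def)
  have adj_BQL_Q: "idx_adj C D BQL Q Lo La iota Ro Ra rB eta eps"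
    using B.idx_adj_comp[OF D adj_QL_Q] by (simp add: iota_def idQ_def rB)
  have rho'_box: "rho' X (box X c) = rho' X c" if "X \<in> Obj C" "c \<in> Car QL X" for X c
    using G.r_l_r[OF that] by (simp add: box)
  have rQ_closed: "rQ Y b \<in> Car QL (Ro Y)" if "Y \<in> Obj D" "b \<in> Car Q Y" for Y b
    using doctrine_Rx_closed[OF \<open>is_doctrine D Q\<close> cat_adj_counit_hom[OF cadj that(1)] that(2)]
    by (simp add: rQ_def QL_def reidx_def)
  show ?thesis
    using G.idx_adj_Fix[folded BQL] adj_QL adj_BQL_QL adj_BQL_Q adj_QL_Q
      G.l_onto_Fix[folded BQL] G.inj_on_r_Fix[folded BQL]
      rho'_box rQ_closed functor_Obj[OF cat_adj_functor_right[OF cadj]]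
    by (simp add: arr_eq_def comp1_def iota_def idQ_def rB)
qed

end
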